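(* Let $k_{11}>0$, $k_{22}>0$, $\nu\in\mathbb{R}$, and let $\mathbf{D}=\begin{pmatrix} d_{11}&d_{12}\\ d_{12}&d_{22}\end{pmatrix}$ be a real symmetric positive definite matrix. Consider the system $\ddot{\mathbf{q}}+\mathbf{D}\dot{\mathbf{q}}+(\mathbf{K}+\mathbf{N})\mathbf{q}=0$, $\mathbf{q}\in\mathbb{R}^2$, with $\mathbf{K}=\mathrm{diag}(k_{11},k_{22})$ and $\mathbf{N}=\begin{pmatrix}0&\nu\\-\nu&0\end{pmatrix}$. Then all roots $\lambda$ of $\det(\lambda^2\mathbf{I}+\lambda\mathbf{D}+\mathbf{K}+\mathbf{N})=0$ have negative real parts if and only if $$\nu^2<\frac{(k_{11}-k_{22})^2}{4}-\frac{(d_{11}-d_{22})^2(k_{11}-k_{22})^2-4(k_{11}d_{22}+k_{22}d_{11})(d_{11}d_{22}-d_{12}^2)(d_{11}+d_{22})}{4(d_{11}+d_{22})^2}.$$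
   Context: $\mathbf{I}$ denotes the $2\times2$ identity matrix. *)

theory Defs
  imports "HOL-Analysis.Analysis"
begin

definition mat2 :: "'a \<Rightarrow> 'a \<Rightarrow> 'a \<Rightarrow> 'a \<Rightarrow> 'a ^ 2 ^ 2" where
  "mat2 a b c d = (\<chi> i j. if i = 1 then (if j = 1 then a else b)
                          else (if j = 1 then c else d))"

definition pos_def :: "real ^ 'n ^ 'n \<Rightarrow> bool" where
  "pos_def A \<longleftrightarrow> transpose A = A \<and> (\<forall>x. x \<noteq> 0 \<longrightarrow> x \<bullet> (A *v x) > 0)"

definition cmat :: "real ^ 'n ^ 'm \<Rightarrow> complex ^ 'n ^ 'm" where
  "cmat A = (\<chi> i j. complex_of_real (A $ i $ j))"

end

theory Submission
  imports Defs "HOL-Computational_Algebra.Fundamental_Theorem_Algebra"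
begin

text \<open>The characteristic polynomial is the real quartic
  \<open>\<lambda>\<^sup>4 + a\<^sub>1\<lambda>\<^sup>3 + a\<^sub>2\<lambda>\<^sup>2 + a\<^sub>3\<lambda> + a\<^sub>4\<close> with \<open>a\<^sub>1 = tr D\<close>,
  \<open>a\<^sub>2 = k\<^sub>1\<^sub>1 + k\<^sub>2\<^sub>2 + det D\<close>, \<open>a\<^sub>3 = d\<^sub>1\<^sub>1k\<^sub>2\<^sub>2 + d\<^sub>2\<^sub>2k\<^sub>1\<^sub>1\<close>, \<open>a\<^sub>4 = k\<^sub>1\<^sub>1k\<^sub>2\<^sub>2 + \<nu>\<^sup>2\<close>.
  Every real quartic is a product of two real monic quadratics
  \<open>(\<lambda>\<^sup>2 + b\<lambda> + c)(\<lambda>\<^sup>2 + e\<lambda> + f)\<close>, and it is stable iff \<open>b, c, e, f > 0\<close>.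
  Expressed in the coefficients this is the Routh--Hurwitz condition
  \<open>a\<^sub>1, a\<^sub>3, a\<^sub>4 > 0\<close> and \<open>a\<^sub>1a\<^sub>2a\<^sub>3 - a\<^sub>3\<^sup>2 - a\<^sub>1\<^sup>2a\<^sub>4 > 0\<close>, the key identity being
  \<open>a\<^sub>1a\<^sub>2a\<^sub>3 - a\<^sub>3\<^sup>2 - a\<^sub>1\<^sup>2a\<^sub>4 = be((c - f)\<^sup>2 + a\<^sub>1a\<^sub>3)\<close>. Positive definiteness of D
  makes \<open>a\<^sub>1, a\<^sub>3, a\<^sub>4\<close> positive, and the remaining Hurwitz inequality,
  multiplied out, is the stated bound on \<open>\<nu>\<^sup>2\<close>.\<close>

definition quartic :: "real \<Rightarrow> real \<Rightarrow> real \<Rightarrow> real \<Rightarrow> complex \<Rightarrow> complex" where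
  "quartic a1 a2 a3 a4 z = z^4 + of_real a1 * z^3 + of_real a2 * z^2 + of_real a3 * z + of_real a4"

lemma quartic_cnj: "cnj (quartic a1 a2 a3 a4 z) = quartic a1 a2 a3 a4 (cnj z)"
  by (simp add: quartic_def)

lemma quartic_product_of_quadratics:
  assumes "a1 = b + e" "a2 = c + f + b * e" "a3 = b * f + c * e" "a4 = c * f"
  shows "quartic a1 a2 a3 a4 z
           = (z^2 + of_real b * z + of_real c) * (z^2 + of_real e * z + of_real f)"
  unfolding quartic_def assms by (simp add: eval_nat_numeral algebra_simps)

lemma complex_quartic_has_root:
  fixes c0 c1 c2 c3 :: complex
  shows "\<exists>z. z^4 + c3 * z^3 + c2 * z^2 + c1 * z + c0 = 0"
proof -
  have "\<not> constant (poly [:c0, c1, c2, c3, 1:])" by (subst constant_degree) simp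
  then obtain z where "poly [:c0, c1, c2, c3, 1:] z = 0"
    using fundamental_theorem_of_algebra by blast
  then show ?thesis by (auto simp: eval_nat_numeral algebra_simps)
qed

lemma complex_cubic_has_root:
  fixes c0 c1 c2 :: complex
  shows "\<exists>z. z^3 + c2 * z^2 + c1 * z + c0 = 0"
proof -
  have "\<not> constant (poly [:c0, c1, c2, 1:])" by (subst constant_degree) simp
  then obtain z where "poly [:c0, c1, c2, 1:] z = 0"
    using fundamental_theorem_of_algebra by blast
  then show ?thesis by (auto simp: eval_nat_numeral algebra_simps)
qed

text \<open>Division by \<open>\<lambda>\<^sup>2 + b\<lambda> + c\<close> leaves a linear remainder vanishing at the two
  distinct roots \<open>u, v\<close>, hence the remainder is zero.\<close>
lemma quartic_factor_of_root_pair: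
  fixes b c :: real and u v :: complex
  assumes "u \<noteq> v" and sum: "u + v = - of_real b" and prod: "u * v = of_real c"
    and u: "quartic a1 a2 a3 a4 u = 0" and v: "quartic a1 a2 a3 a4 v = 0"
  shows "\<exists>b c e f. a1 = b + e \<and> a2 = c + f + b * e \<and> a3 = b * f + c * e \<and> a4 = c * f"
proof -
  define e where "e = a1 - b"
  define f where "f = a2 - c - b * e"
  define r1 where "r1 = a3 - b * f - c * e"
  define r0 where "r0 = a4 - c * f"
  have division: "quartic a1 a2 a3 a4 z
      = (z^2 + of_real b * z + of_real c) * (z^2 + of_real e * z + of_real f)
        + of_real r1 * z + of_real r0" for z
    by (simp add: quartic_def e_def f_def r1_def r0_def eval_nat_numeral algebra_simps)
  have b: "of_real b = - (u + v)" and c: "of_real c = u * v" using sum prod by simp_all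
  have "z^2 + of_real b * z + of_real c = (z - u) * (z - v)" for z
    unfolding b c by (simp add: power2_eq_square algebra_simps)
  then have ru: "of_real r1 * u + of_real r0 = 0" and rv: "of_real r1 * v + of_real r0 = 0"
    using division[of u] division[of v] u v by simp_all
  have "of_real r1 * (u - v) = (of_real r1 * u + of_real r0) - (of_real r1 * v + of_real r0)"
    by (simp add: algebra_simps)
  with ru rv have "of_real r1 * (u - v) = 0" by simp
  then have "r1 = 0" using \<open>u \<noteq> v\<close> by simp
  with ru have "r0 = 0" by simp
  with \<open>r1 = 0\<close> have "a1 = b + e \<and> a2 = c + f + b * e \<and> a3 = b * f + c * e \<and> a4 = c * f"
    unfolding r1_def r0_def f_def e_def by simp
  then show ?thesis by blast
qed

lemma quartic_factor_of_nonreal_root: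
  assumes "quartic a1 a2 a3 a4 z = 0" and "Im z \<noteq> 0"
  shows "\<exists>b c e f. a1 = b + e \<and> a2 = c + f + b * e \<and> a3 = b * f + c * e \<and> a4 = c * f"
proof (rule quartic_factor_of_root_pair)
  show "z \<noteq> cnj z" using \<open>Im z \<noteq> 0\<close> by (metis cnj.simps(2) neg_equal_zero)
  show "quartic a1 a2 a3 a4 (cnj z) = 0" by (metis assms(1) complex_cnj_zero quartic_cnj)
  show "z + cnj z = - of_real (-2 * Re z)" by (simp add: complex_add_cnj)
  show "z * cnj z = of_real (Re z ^ 2 + Im z ^ 2)" by (simp add: complex_mult_cnj)
qed fact

text \<open>Deflation by a real root \<open>x\<close>: the quartic is \<open>(\<lambda> - x)(\<lambda>\<^sup>3 + g\<^sub>2\<lambda>\<^sup>2 + g\<^sub>1\<lambda> + g\<^sub>0)\<close>.\<close>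
lemma quartic_deflate_real_root:
  assumes "quartic a1 a2 a3 a4 (of_real x) = 0"
  obtains g2 g1 g0 where "a1 = g2 - x" "a2 = g1 - x * g2" "a3 = g0 - x * g1" "a4 = - (x * g0)"
proof -
  have "complex_of_real (x^4 + a1 * x^3 + a2 * x^2 + a3 * x + a4) = 0"
    using assms by (simp add: quartic_def)
  then have "x^4 + a1 * x^3 + a2 * x^2 + a3 * x + a4 = 0" by (simp only: of_real_eq_0_iff)
  then have "a4 = - (x * (a3 + x * (a2 + x * (a1 + x))))"
    by (simp add: eval_nat_numeral algebra_simps)
  then show ?thesis
    by (intro that[of "a1 + x" "a2 + x * (a1 + x)" "a3 + x * (a2 + x * (a1 + x))"]) simp_all
qed

lemma quartic_factor_of_real_root:
  assumes "quartic a1 a2 a3 a4 (of_real x) = 0"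
  shows "\<exists>b c e f. a1 = b + e \<and> a2 = c + f + b * e \<and> a3 = b * f + c * e \<and> a4 = c * f"
proof -
  obtain g2 g1 g0 where g: "a1 = g2 - x" "a2 = g1 - x * g2" "a3 = g0 - x * g1" "a4 = - (x * g0)"
    using assms by (rule quartic_deflate_real_root)
  have deflated: "quartic a1 a2 a3 a4 z
      = (z - of_real x) * (z^3 + of_real g2 * z^2 + of_real g1 * z + of_real g0)" for z
    unfolding quartic_def g by (simp add: eval_nat_numeral algebra_simps)
  obtain z :: complex where z: "z^3 + of_real g2 * z^2 + of_real g1 * z + of_real g0 = 0"
    using complex_cubic_has_root[of "of_real g2" "of_real g1" "of_real g0"] by blast
  show ?thesis
  proof (cases "Im z = 0")
    case False
    with z deflated show ?thesis by (metis quartic_factor_of_nonreal_root mult_zero_right)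
  next
    case True
    define y where "y = Re z"
    from True have "z = of_real y" by (simp add: complex_eq_iff y_def)
    with z have "complex_of_real (y^3 + g2 * y^2 + g1 * y + g0) = 0" by simp
    then have g0: "g0 = - (y^3 + g2 * y^2 + g1 * y)" by (simp only: of_real_eq_0_iff)
    have "a1 = - (x + y) + (g2 + y)
        \<and> a2 = x * y + (g1 + y * (g2 + y)) + - (x + y) * (g2 + y)
        \<and> a3 = - (x + y) * (g1 + y * (g2 + y)) + x * y * (g2 + y)
        \<and> a4 = x * y * (g1 + y * (g2 + y))"
      unfolding g g0 by (simp add: eval_nat_numeral algebra_simps)
    then show ?thesis by blast
  qed
qed

lemma real_quartic_factor:
  fixes a1 a2 a3 a4 :: real
  shows "\<exists>b c e f. a1 = b + e \<and> a2 = c + f + b * e \<and> a3 = b * f + c * e \<and> a4 = c * f"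
proof -
  obtain z where z: "quartic a1 a2 a3 a4 z = 0"
    using complex_quartic_has_root[of "of_real a1" "of_real a2" "of_real a3" "of_real a4"]
    unfolding quartic_def by blast
  show ?thesis
  proof (cases "Im z = 0")
    case True
    then have "z = of_real (Re z)" by (simp add: complex_eq_iff)
    with z show ?thesis by (metis quartic_factor_of_real_root)
  qed (use z quartic_factor_of_nonreal_root in blast)
qed

lemma quadratic_root_Re_neg:
  fixes z :: complex
  assumes "b > 0" "c > 0" and root: "z^2 + of_real b * z + of_real c = 0"
  shows "Re z < 0"
proof (cases "Im z = 0")
  case True
  have "Re z * Re z + b * Re z + c = 0"
    using arg_cong[OF root, of Re] True by (simp add: power2_eq_square)
  moreover have "Re z * Re z + b * Re z \<ge> 0" if "Re z \<ge> 0"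
    using that \<open>b > 0\<close> by simp
  ultimately show ?thesis using \<open>c > 0\<close> by fastforce
next
  case False
  have "(2 * Re z + b) * Im z = 0"
    using arg_cong[OF root, of Im] by (simp add: power2_eq_square algebra_simps)
  with False \<open>b > 0\<close> show ?thesis by simp
qed

lemma quadratic_root_Re_nonneg:
  assumes "\<not> (b > 0 \<and> c > 0)"
  shows "\<exists>z::complex. z^2 + of_real b * z + of_real c = 0 \<and> Re z \<ge> 0"
proof (cases "b^2 - 4 * c \<ge> 0")
  case True
  define s where "s = sqrt (b^2 - 4 * c)"
  have s2: "s^2 = b^2 - 4 * c" and "s \<ge> 0" using True by (simp_all add: s_def)
  have "- b + s \<ge> 0"
  proof (cases "b \<le> 0")
    case False
    with assms have "b^2 \<le> b^2 - 4 * c" by auto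
    then have "sqrt (b^2) \<le> s" unfolding s_def by (rule real_sqrt_le_mono)
    then show ?thesis by simp
  qed (use \<open>s \<ge> 0\<close> in simp)
  moreover have "((- b + s) / 2)^2 + b * ((- b + s) / 2) + c = 0"
    using s2 by (simp add: power2_eq_square field_simps)
  ultimately show ?thesis
    by (intro exI[of _ "of_real ((- b + s) / 2)"])
       (simp del: of_real_add of_real_mult of_real_divide of_real_power
             add: of_real_add[symmetric] of_real_mult[symmetric] of_real_power[symmetric])
next
  case False
  define s where "s = sqrt (4 * c - b^2)"
  have "s^2 = 4 * c - b^2" using False by (simp add: s_def)
  moreover have "b \<le> 0"
  proof -
    have "c > 0" using False zero_le_power2[of b] by linarith
    with assms show ?thesis by auto
  qed
  ultimately show ?thesis
    by (intro exI[of _ "Complex (- b / 2) (s / 2)"])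
       (simp add: complex_eq_iff power2_eq_square field_simps)
qed

lemma quadratic_stable_iff:
  "(\<forall>z::complex. z^2 + of_real b * z + of_real c = 0 \<longrightarrow> Re z < 0) \<longleftrightarrow> b > 0 \<and> c > 0"
  using quadratic_root_Re_neg quadratic_root_Re_nonneg by force

lemma quartic_stable_iff_Hurwitz:
  "(\<forall>z. quartic a1 a2 a3 a4 z = 0 \<longrightarrow> Re z < 0)
     \<longleftrightarrow> a1 > 0 \<and> a3 > 0 \<and> a4 > 0 \<and> a1 * a2 * a3 - a3^2 - a1^2 * a4 > 0"
proof -
  obtain b c e f where coeffs: "a1 = b + e" "a2 = c + f + b * e" "a3 = b * f + c * e" "a4 = c * f"
    using real_quartic_factor by blast
  have "(\<forall>z. quartic a1 a2 a3 a4 z = 0 \<longrightarrow> Re z < 0)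
      \<longleftrightarrow> (\<forall>z::complex. z^2 + of_real b * z + of_real c = 0 \<longrightarrow> Re z < 0)
         \<and> (\<forall>z::complex. z^2 + of_real e * z + of_real f = 0 \<longrightarrow> Re z < 0)"
    using quartic_product_of_quadratics[OF coeffs] by auto
  also have "\<dots> \<longleftrightarrow> b > 0 \<and> c > 0 \<and> e > 0 \<and> f > 0"
    unfolding quadratic_stable_iff by blast
  also have "\<dots> \<longleftrightarrow> a1 > 0 \<and> a3 > 0 \<and> a4 > 0 \<and> b * e * ((c - f)^2 + a1 * a3) > 0"
  proof
    assume pos: "b > 0 \<and> c > 0 \<and> e > 0 \<and> f > 0"
    then have "a1 > 0" "a3 > 0" "a4 > 0" unfolding coeffs by (simp_all add: add_pos_pos)
    moreover from pos have "b * e > 0" by simp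
    moreover have "(c - f)^2 + a1 * a3 > 0" using \<open>a1 > 0\<close> \<open>a3 > 0\<close> by (simp add: add_nonneg_pos)
    ultimately show "a1 > 0 \<and> a3 > 0 \<and> a4 > 0 \<and> b * e * ((c - f)^2 + a1 * a3) > 0" by simp
  next
    assume H: "a1 > 0 \<and> a3 > 0 \<and> a4 > 0 \<and> b * e * ((c - f)^2 + a1 * a3) > 0"
    then have "(c - f)^2 + a1 * a3 > 0" by (simp add: add_nonneg_pos)
    with H have "b * e > 0" by (simp add: zero_less_mult_iff)
    moreover have "b + e > 0" using H coeffs(1) by simp
    ultimately have "b > 0" "e > 0" by (auto simp: zero_less_mult_iff)
    have "c * f > 0" "b * f + c * e > 0" using H coeffs(3,4) by simp_all
    moreover have "\<not> (c < 0 \<and> f < 0)"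
    proof
      assume "c < 0 \<and> f < 0"
      with \<open>b > 0\<close> \<open>e > 0\<close> have "b * f + c * e < 0"
        by (simp add: add_neg_neg mult_pos_neg mult_neg_pos)
      with \<open>b * f + c * e > 0\<close> show False by simp
    qed
    ultimately show "b > 0 \<and> c > 0 \<and> e > 0 \<and> f > 0"
      using \<open>b > 0\<close> \<open>e > 0\<close> by (auto simp: zero_less_mult_iff)
  qed
  also have "b * e * ((c - f)^2 + a1 * a3) = a1 * a2 * a3 - a3^2 - a1^2 * a4"
    unfolding coeffs by (simp add: eval_nat_numeral algebra_simps)
  finally show ?thesis .
qed

lemma mat2_quadratic_form:
  "x \<bullet> (mat2 a b b c *v x) = a * (x$1)^2 + 2 * b * x$1 * x$2 + c * (x$2)^2"
  by (simp add: inner_vec_def matrix_vector_mult_def sum_2 mat2_def power2_eq_square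
      algebra_simps)

lemma pos_def_mat2_imp:
  assumes "pos_def (mat2 a b b c)"
  shows "a > 0" "a * c - b^2 > 0"
proof -
  have pos: "x \<bullet> (mat2 a b b c *v x) > 0" if "x \<noteq> 0" for x :: "real^2"
    using assms that unfolding pos_def_def by blast
  define e1 :: "real^2" where "e1 = (\<chi> i. if i = 1 then 1 else 0)"
  have "e1 $ 1 = 1" by (simp add: e1_def)
  then have "e1 \<noteq> 0" by (metis zero_index zero_neq_one)
  from pos[OF this] show "a > 0" by (simp add: mat2_quadratic_form e1_def)
  define x :: "real^2" where "x = (\<chi> i. if i = 1 then - b else a)"
  have "x $ 2 = a" by (simp add: x_def)
  with \<open>a > 0\<close> have "x \<noteq> 0" by (metis zero_index less_irrefl)
  from pos[OF this] have "a * (a * c - b^2) > 0"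
    by (simp add: mat2_quadratic_form x_def power2_eq_square algebra_simps)
  with \<open>a > 0\<close> show "a * c - b^2 > 0" by (simp add: zero_less_mult_iff)
qed

lemma det_characteristic_matrix:
  "det (mat (z^2) + mat z ** cmat (mat2 d11 d12 d12 d22)
        + cmat (mat2 k11 0 0 k22 + mat2 0 \<nu> (-\<nu>) 0))
   = quartic (d11 + d22) (k11 + k22 + (d11 * d22 - d12^2)) (d11 * k22 + d22 * k11)
       (k11 * k22 + \<nu>^2) z"
  unfolding det_2
  by (simp add: mat2_def cmat_def matrix_matrix_mult_def mat_def sum_2 quartic_def
      eval_nat_numeral algebra_simps)

lemma nu_bound_iff_Hurwitz:
  fixes k11 k22 \<nu> d11 d12 d22 :: real
  defines "a1 \<equiv> d11 + d22" and "a2 \<equiv> k11 + k22 + (d11 * d22 - d12^2)"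
    and "a3 \<equiv> d11 * k22 + d22 * k11" and "a4 \<equiv> k11 * k22 + \<nu>^2"
  assumes "a1 \<noteq> 0"
  shows "\<nu>^2 < (k11 - k22)^2 / 4
          - ((d11 - d22)^2 * (k11 - k22)^2
             - 4 * (k11 * d22 + k22 * d11) * (d11 * d22 - d12^2) * (d11 + d22))
            / (4 * (d11 + d22)^2)
     \<longleftrightarrow> a1 * a2 * a3 - a3^2 - a1^2 * a4 > 0"
proof -
  define X where "X = (d11 - d22)^2 * (k11 - k22)^2
             - 4 * (k11 * d22 + k22 * d11) * (d11 * d22 - d12^2) * (d11 + d22)"
  have "(k11 - k22)^2 / 4 - X / (4 * a1^2) - \<nu>^2
      = (a1^2 * (k11 - k22)^2 - X - 4 * a1^2 * \<nu>^2) / (4 * a1^2)"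
    using \<open>a1 \<noteq> 0\<close> by (simp add: field_simps)
  also have "a1^2 * (k11 - k22)^2 - X - 4 * a1^2 * \<nu>^2 = 4 * (a1 * a2 * a3 - a3^2 - a1^2 * a4)"
    unfolding X_def assms(1-4) by (simp add: power2_eq_square algebra_simps)
  finally have "(k11 - k22)^2 / 4 - X / (4 * a1^2) - \<nu>^2
      = 4 * (a1 * a2 * a3 - a3^2 - a1^2 * a4) / (4 * a1^2)" .
  then have "\<nu>^2 < (k11 - k22)^2 / 4 - X / (4 * a1^2)
      \<longleftrightarrow> 0 < 4 * (a1 * a2 * a3 - a3^2 - a1^2 * a4) / (4 * a1^2)"
    by linarith
  also have "\<dots> \<longleftrightarrow> a1 * a2 * a3 - a3^2 - a1^2 * a4 > 0"
    using \<open>a1 \<noteq> 0\<close> by (simp add: zero_less_divide_iff) arith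
  finally show ?thesis unfolding X_def a1_def .
qed

theorem mainTheorem4:
  fixes k11 k22 \<nu> d11 d12 d22 :: real
  assumes "k11 > 0" and "k22 > 0"
    and "pos_def (mat2 d11 d12 d12 d22)"
  shows "(\<forall>z::complex.
            det (mat (z^2) + mat z ** cmat (mat2 d11 d12 d12 d22)
                 + cmat (mat2 k11 0 0 k22 + mat2 0 \<nu> (-\<nu>) 0)) = 0
            \<longrightarrow> Re z < 0)
     \<longleftrightarrow> \<nu>^2 < (k11 - k22)^2 / 4
          - ((d11 - d22)^2 * (k11 - k22)^2
             - 4 * (k11 * d22 + k22 * d11) * (d11 * d22 - d12^2) * (d11 + d22))
            / (4 * (d11 + d22)^2)"
proof -
  have "d11 > 0" "d11 * d22 - d12^2 > 0"
    using pos_def_mat2_imp[OF assms(3)] by simp_all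
  moreover have "d12^2 \<ge> 0" by simp
  ultimately have "d11 * d22 > 0" by linarith
  with \<open>d11 > 0\<close> have "d22 > 0" by (simp add: zero_less_mult_iff)
  with \<open>d11 > 0\<close> assms(1,2)
  have "d11 + d22 > 0" "d11 * k22 + d22 * k11 > 0" "k11 * k22 + \<nu>^2 > 0"
    by (simp_all add: add_pos_pos add_pos_nonneg)
  then show ?thesis
    unfolding det_characteristic_matrix quartic_stable_iff_Hurwitz
      nu_bound_iff_Hurwitz[OF less_imp_neq[OF \<open>d11 + d22 > 0\<close>, symmetric]]
    by blast
qed

end
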